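(* Let $w_1,\dots,w_r\in\mathbb{R}^{2n}$ be pairwise distinct points whose real affine span has dimension at least $3$, and let $f(x)=\sum_{i=1}^r\log|x-w_i|^2$ on $\mathbb{R}^{2n}\setminus\{w_1,\dots,w_r\}$. Then at every critical point of $f$ the Hessian of $f$ has positivity index at least $2n-1$.
   Context: $|\cdot|$ is the Euclidean norm. The positivity index of a symmetric bilinear form is the number of positive eigenvalues of its matrix. *)

theory Defs
  imports "HOL-Analysis.Analysis" "HOL-Computational_Algebra.Polynomial"
begin

definition partial_deriv :: "(real^'n \<Rightarrow> real) \<Rightarrow> 'n \<Rightarrow> real^'n \<Rightarrow> real" where
  "partial_deriv f i x = deriv (\<lambda>t. f (x + t *\<^sub>R axis i 1)) 0"

definition hessian :: "(real^'n \<Rightarrow> real) \<Rightarrow> real^'n \<Rightarrow> real^'n^'n" where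
  "hessian f x = (\<chi> i j. partial_deriv (partial_deriv f j) i x)"

definition charpoly :: "real^'n^'n \<Rightarrow> real poly" where
  "charpoly A = det (\<chi> i j. (if i = j then [:0, 1:] else 0) - [:A $ i $ j:])"

definition positivity_index :: "real^'n^'n \<Rightarrow> nat" where
  "positivity_index A = (\<Sum>a\<in>{a. a > 0 \<and> poly (charpoly A) a = 0}. order a (charpoly A))"

end

theory Submission
  imports Defs
begin

text \<open>The Hessian of \<open>u \<mapsto> ln |u|\<^sup>2\<close> is \<open>(2|u|\<^sup>2 I - 4 u u\<^sup>T) / |u|\<^sup>4\<close>. On an orthonormal pair
  \<open>e\<^sub>1, e\<^sub>2\<close> the sum of its two diagonal entries is \<open>4 |u\<^sub>\<bottom>|\<^sup>2 / |u|\<^sup>4 \<ge> 0\<close>, where \<open>u\<^sub>\<bottom>\<close> is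
  the component of \<open>u\<close> orthogonal to \<open>e\<^sub>1, e\<^sub>2\<close>. If the Hessian of \<open>f\<close> at \<open>x\<close> had two
  nonpositive eigenvalues, their orthonormal eigenvectors would make the sum of these
  quantities over all \<open>u = x - w\<^sub>k\<close> nonpositive, hence every \<open>u\<^sub>\<bottom>\<close> zero: all the points
  \<open>w\<^sub>k\<close> would lie in the affine plane \<open>x + span {e\<^sub>1, e\<^sub>2}\<close>, contradicting the dimension
  hypothesis. The spectral theorem and the resulting factorisation of the characteristic
  polynomial turn this into the bound on the positivity index.\<close>

section \<open>Spectral theorem for real symmetric matrices\<close>

lemma symmetric_matrix_inner_commute:
  fixes A :: "real^'n^'n"
  assumes "transpose A = A"
  shows "x \<bullet> (A *v y) = (A *v x) \<bullet> y"
  by (metis assms dot_lmul_matrix vector_transpose_matrix)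

lemma eq_0_if_quadratic_nonpos:
  fixes a b :: real
  assumes "\<And>t. 2 * t * a + t\<^sup>2 * b \<le> 0"
  shows "a = 0"
proof -
  define s where "s = 1 / (1 + \<bar>b\<bar>)"
  have s: "s > 0" "s * \<bar>b\<bar> < 1"
    unfolding s_def by (auto simp: field_simps)
  have "s * a\<^sup>2 * (2 + s * b) = 2 * (s * a) * a + (s * a)\<^sup>2 * b"
    by (simp add: power2_eq_square algebra_simps)
  also have "\<dots> \<le> 0" by (rule assms)
  finally have "s * a\<^sup>2 * (2 + s * b) \<le> 0" .
  moreover have "2 + s * b > 0"
    using s abs_ge_minus_self[of b] mult_left_mono[of "-b" "\<bar>b\<bar>" s] by linarith
  ultimately have "a\<^sup>2 \<le> 0"
    using s by (simp add: mult_le_0_iff zero_less_mult_iff)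
  thus ?thesis by simp
qed

lemma rayleigh_maximizer_is_eigenvector:
  fixes A :: "real^'n^'n"
  assumes sym: "transpose A = A" and S: "subspace S" and inv: "\<And>y. y \<in> S \<Longrightarrow> A *v y \<in> S"
    and v: "v \<in> S" "norm v = 1"
    and max: "\<And>y. y \<in> S \<Longrightarrow> norm y = 1 \<Longrightarrow> y \<bullet> (A *v y) \<le> v \<bullet> (A *v v)"
  shows "A *v v = (v \<bullet> (A *v v)) *\<^sub>R v"
proof -
  define l where "l = v \<bullet> (A *v v)"
  have bound: "y \<bullet> (A *v y) \<le> l * (y \<bullet> y)" if "y \<in> S" for y
  proof (cases "y = 0")
    case False
    have "(1 / norm y)\<^sup>2 * (y \<bullet> (A *v y)) = ((1 / norm y) *\<^sub>R y) \<bullet> (A *v ((1 / norm y) *\<^sub>R y))"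
      by (simp add: matrix_vector_mult_scaleR power2_eq_square)
    also have "\<dots> \<le> l"
      unfolding l_def using False that S by (intro max) (auto simp: subspace_scale)
    finally show ?thesis
      using False by (simp add: field_simps dot_square_norm)
  qed simp
  have "w \<bullet> (A *v v - l *\<^sub>R v) = 0" if w: "w \<in> S" for w
  proof (rule eq_0_if_quadratic_nonpos)
    fix t :: real
    have "v + t *\<^sub>R w \<in> S"
      using S v w by (simp add: subspace_add subspace_scale)
    from bound[OF this] show "2 * t * (w \<bullet> (A *v v - l *\<^sub>R v)) + t\<^sup>2 * (w \<bullet> (A *v w) - l * (w \<bullet> w)) \<le> 0"
      using symmetric_matrix_inner_commute[OF sym, of v w] v(2)
      by (simp add: l_def algebra_simps power2_eq_square inner_commute[of w v]
          inner_commute[of "A *v v" w] norm_eq_1)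
  qed
  moreover have "A *v v - l *\<^sub>R v \<in> S"
    using S inv v by (simp add: subspace_diff subspace_scale)
  ultimately show ?thesis
    unfolding l_def by (metis inner_eq_zero_iff right_minus_eq)
qed

lemma symmetric_matrix_has_eigenvector_in_invariant_subspace:
  fixes A :: "real^'n^'n"
  assumes sym: "transpose A = A" and S: "subspace S" "S \<noteq> {0}"
    and inv: "\<And>y. y \<in> S \<Longrightarrow> A *v y \<in> S"
  obtains v l where "v \<in> S" "norm v = 1" "A *v v = l *\<^sub>R v"
proof -
  obtain y where y: "y \<in> S" "y \<noteq> 0"
    using S subspace_0 by blast
  let ?K = "S \<inter> sphere 0 1"
  have "(1 / norm y) *\<^sub>R y \<in> ?K"
    using y S by (simp add: subspace_scale)
  hence "?K \<noteq> {}"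
    by blast
  moreover have "compact ?K"
    by (simp add: closed_Int_compact closed_subspace S)
  moreover have "continuous_on ?K (\<lambda>y. y \<bullet> (A *v y))"
    by (intro continuous_intros)
  ultimately obtain v where v: "v \<in> ?K" and max: "\<forall>y\<in>?K. y \<bullet> (A *v y) \<le> v \<bullet> (A *v v)"
    using continuous_attains_sup by blast
  have "v \<in> S" "norm v = 1"
    using v by auto
  moreover from this have "A *v v = (v \<bullet> (A *v v)) *\<^sub>R v"
    using max by (intro rayleigh_maximizer_is_eigenvector[OF sym S(1) inv]) auto
  ultimately show ?thesis
    by (rule that)
qed

lemma symmetric_matrix_invariant_subspace_orthonormal_eigenbasis:
  fixes A :: "real^'n^'n"
  assumes sym: "transpose A = A"
  shows "subspace S \<Longrightarrow> (\<And>y. y \<in> S \<Longrightarrow> A *v y \<in> S) \<Longrightarrow>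
    \<exists>B. B \<subseteq> S \<and> pairwise orthogonal B \<and> (\<forall>b\<in>B. norm b = 1 \<and> (\<exists>l. A *v b = l *\<^sub>R b)) \<and> span B = S"
proof (induction "dim S" arbitrary: S rule: less_induct)
  case less
  show ?case
  proof (cases "S = {0}")
    case True
    then show ?thesis by (intro exI[of _ "{}"]) auto
  next
    case False
    obtain v l where v: "v \<in> S" "norm v = 1" and ev: "A *v v = l *\<^sub>R v"
      using symmetric_matrix_has_eigenvector_in_invariant_subspace[OF sym less.prems(1) False less.prems(2)] .
    define S' where "S' = {z \<in> S. v \<bullet> z = 0}"
    have S': "subspace S'"
      unfolding S'_def using less.prems(1) by (auto simp: subspace_def inner_add_right)
    have inv': "A *v z \<in> S'" if z: "z \<in> S'" for z
    proof -
      have "v \<bullet> (A *v z) = (A *v v) \<bullet> z"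
        by (rule symmetric_matrix_inner_commute[OF sym])
      also have "\<dots> = 0"
        using z ev unfolding S'_def by simp
      finally show ?thesis
        using z less.prems(2) unfolding S'_def by simp
    qed
    have "S' \<subseteq> S" "v \<notin> S'"
      using v unfolding S'_def by (auto simp: dot_square_norm)
    hence "span S' \<subset> span S"
      using v S' less.prems(1) by (metis span_eq_iff psubsetI)
    hence "dim S' < dim S"
      by (rule dim_psubset)
    from less.hyps[OF this S' inv'] obtain B where B: "B \<subseteq> S'" "pairwise orthogonal B"
      "\<forall>b\<in>B. norm b = 1 \<and> (\<exists>l. A *v b = l *\<^sub>R b)" "span B = S'"
      by blast
    have "S \<subseteq> span (insert v B)"
    proof
      fix z assume z: "z \<in> S"
      have "z - (v \<bullet> z) *\<^sub>R v \<in> span B"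
        using z v less.prems(1) unfolding B(4) S'_def
        by (auto simp: subspace_diff subspace_scale inner_diff_right dot_square_norm)
      hence "z - (v \<bullet> z) *\<^sub>R v \<in> span (insert v B)"
        by (metis span_mono subset_insertI subsetD)
      moreover have "(v \<bullet> z) *\<^sub>R v \<in> span (insert v B)"
        by (simp add: span_base span_scale)
      ultimately have "z - (v \<bullet> z) *\<^sub>R v + (v \<bullet> z) *\<^sub>R v \<in> span (insert v B)"
        by (rule span_add)
      thus "z \<in> span (insert v B)" by simp
    qed
    moreover have "insert v B \<subseteq> S"
      using B(1) v unfolding S'_def by auto
    ultimately have "span (insert v B) = S"
      using less.prems(1) by (metis span_minimal subset_antisym)
    moreover have "pairwise orthogonal (insert v B)"
      using B(1,2) unfolding S'_def by (auto simp: pairwise_insert orthogonal_def inner_commute)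
    moreover have "\<forall>b\<in>insert v B. norm b = 1 \<and> (\<exists>l. A *v b = l *\<^sub>R b)"
      using B(3) v ev by blast
    ultimately show ?thesis
      using \<open>insert v B \<subseteq> S\<close> by (intro exI[of _ "insert v B"] conjI)
  qed
qed

lemma symmetric_matrix_orthonormal_eigenvectors:
  fixes A :: "real^'n^'n"
  assumes sym: "transpose A = A"
  obtains q :: "'n \<Rightarrow> real^'n" and lam :: "'n \<Rightarrow> real"
  where "\<And>i j. q i \<bullet> q j = (if i = j then 1 else 0)" "\<And>i. A *v q i = lam i *\<^sub>R q i"
proof -
  obtain B where B: "pairwise orthogonal B" "\<forall>b\<in>B. norm b = 1 \<and> (\<exists>l. A *v b = l *\<^sub>R b)"
    "span B = UNIV"
    using symmetric_matrix_invariant_subspace_orthonormal_eigenbasis[OF sym, of UNIV] by auto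
  have "independent B"
    using B(1,2) pairwise_orthogonal_independent by force
  hence "finite B" "card B = CARD('n)"
    using B(3) dim_span_eq_card_independent[of B] finiteI_independent by auto
  then obtain q :: "'n \<Rightarrow> real^'n" where q: "bij_betw q UNIV B"
    using finite_same_card_bij[of "UNIV :: 'n set" B] by auto
  have "\<exists>l. A *v q i = l *\<^sub>R q i" for i
    using B(2) q by (auto dest: bij_betwE)
  then obtain lam where "\<And>i. A *v q i = lam i *\<^sub>R q i"
    by metis
  moreover have "q i \<bullet> q j = (if i = j then 1 else 0)" for i j
  proof (cases "i = j")
    case True
    then show ?thesis using B(2) bij_betwE[OF q] by (simp add: dot_square_norm)
  next
    case False
    then have "q i \<noteq> q j"
      using bij_betw_imp_inj_on[OF q] by (metis inj_onD UNIV_I)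
    then show ?thesis
      using False B(1) bij_betwE[OF q] unfolding pairwise_def orthogonal_def by auto
  qed
  ultimately show ?thesis
    using that by blast
qed

section \<open>Characteristic polynomial and positivity index\<close>

definition poly_matrix :: "real^'n^'m \<Rightarrow> real poly^'n^'m" where
  "poly_matrix A = (\<chi> i j. [:A $ i $ j:])"

lemma poly_matrix_mult: "poly_matrix (A ** B) = poly_matrix A ** poly_matrix B"
  by (simp add: poly_matrix_def matrix_matrix_mult_def vec_eq_iff sum_to_poly mult.commute)

lemma poly_matrix_mat: "poly_matrix (mat c) = mat [:c:]"
  by (simp add: poly_matrix_def mat_def vec_eq_iff)

lemma matrix_mul_mat_commute:
  fixes A :: "'a::comm_semiring_1^'n^'n"
  shows "A ** mat c = mat c ** A"
  by (simp add: matrix_matrix_mult_def mat_def vec_eq_iff if_distrib if_distribR mult.commute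
      sum.delta sum.delta' cong: if_cong)

lemma matrix_diff_ldistrib: "(A :: 'a::ring_1^'n^'m) ** (B - C) = A ** B - A ** C"
  by (vector matrix_matrix_mult_def sum_subtractf right_diff_distrib)

lemma matrix_diff_rdistrib: "((B - C) :: 'a::ring_1^'n^'m) ** A = B ** A - C ** A"
  by (vector matrix_matrix_mult_def sum_subtractf left_diff_distrib)

lemma charpoly_poly_matrix: "charpoly A = det (mat [:0, 1:] - poly_matrix A)"
  unfolding charpoly_def poly_matrix_def mat_def
  by (rule arg_cong[of _ _ det]) (simp add: vec_eq_iff)

lemma charpoly_similar:
  fixes A P Q :: "real^'n^'n"
  assumes "P ** Q = mat 1"
  shows "charpoly (P ** A ** Q) = charpoly A"
proof -
  let ?X = "mat [:0, 1:] :: real poly^'n^'n"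
  have PQ: "poly_matrix P ** poly_matrix Q = mat 1"
    by (simp add: assms poly_matrix_mat pCons_one flip: poly_matrix_mult)
  have "poly_matrix P ** ?X ** poly_matrix Q = ?X ** (poly_matrix P ** poly_matrix Q)"
    by (simp add: matrix_mul_assoc matrix_mul_mat_commute)
  hence "poly_matrix P ** (?X - poly_matrix A) ** poly_matrix Q = ?X - poly_matrix (P ** A ** Q)"
    by (simp add: matrix_diff_ldistrib matrix_diff_rdistrib PQ poly_matrix_mult)
  hence "charpoly (P ** A ** Q) = det (poly_matrix P ** (?X - poly_matrix A) ** poly_matrix Q)"
    by (simp add: charpoly_poly_matrix)
  also have "\<dots> = det (poly_matrix P ** poly_matrix Q) * charpoly A"
    by (simp add: charpoly_poly_matrix det_mul)
  finally show ?thesis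
    by (simp add: PQ)
qed

lemma charpoly_diagonal:
  "charpoly (\<chi> i j. if i = j then d i else 0) = (\<Prod>i\<in>UNIV. [:- d i, 1:])"
  unfolding charpoly_def by (subst det_diagonal) auto

lemma charpoly_orthonormal_eigenvectors:
  fixes A :: "real^'n^'n" and q :: "'n \<Rightarrow> real^'n"
  assumes orth: "\<And>i j. q i \<bullet> q j = (if i = j then 1 else 0)"
    and eigen: "\<And>i. A *v q i = lam i *\<^sub>R q i"
  shows "charpoly A = (\<Prod>i\<in>UNIV. [:- lam i, 1:])"
proof -
  define Q :: "real^'n^'n" where "Q = (\<chi> k i. q i $ k)"
  have QQ: "transpose Q ** Q = mat 1"
    using orth by (simp add: Q_def transpose_def matrix_matrix_mult_def vec_eq_iff mat_def inner_vec_def)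
  have AQ: "A ** Q = (\<chi> k j. (A *v q j) $ k)"
    by (simp add: Q_def matrix_matrix_mult_def matrix_vector_mult_def vec_eq_iff)
  have "(transpose Q ** A ** Q) $ i $ j = (transpose Q ** (A ** Q)) $ i $ j" for i j
    by (simp add: matrix_mul_assoc)
  also have "(transpose Q ** (A ** Q)) $ i $ j = q i \<bullet> (A *v q j)" for i j
    by (simp add: AQ Q_def transpose_def matrix_matrix_mult_def matrix_vector_mult_def inner_vec_def)
  also have "q i \<bullet> (A *v q j) = (if i = j then lam i else 0)" for i j
    by (simp add: eigen orth)
  finally have "transpose Q ** A ** Q = (\<chi> i j. if i = j then lam i else 0)"
    by (simp add: vec_eq_iff)
  with charpoly_similar[OF QQ, of A] show ?thesis
    by (simp add: charpoly_diagonal)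
qed

lemma order_linear_factor:
  fixes a b :: "'a::idom"
  shows "order a [:- b, 1:] = (if a = b then 1 else 0)"
  using order_power_n_n[of a 1] by (auto intro: order_0I)

lemma order_prod_linear_factors:
  fixes c :: "'i \<Rightarrow> 'a::idom"
  assumes "finite I"
  shows "order a (\<Prod>i\<in>I. [:- c i, 1:]) = card {i \<in> I. c i = a}"
  using assms
proof (induction I rule: finite_induct)
  case (insert k I)
  have "(\<Prod>i\<in>insert k I. [:- c i, 1:]) = [:- c k, 1:] * (\<Prod>i\<in>I. [:- c i, 1:])"
    using insert.hyps by simp
  moreover have "(\<Prod>i\<in>I. [:- c i, 1:]) \<noteq> 0"
    using insert.hyps by (simp add: prod_zero_iff)
  hence "[:- c k, 1:] * (\<Prod>i\<in>I. [:- c i, 1:]) \<noteq> 0"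
    by (metis mult_eq_0_iff pCons_eq_0_iff zero_neq_one)
  ultimately have "order a (\<Prod>i\<in>insert k I. [:- c i, 1:]) = order a [:- c k, 1:] + order a (\<Prod>i\<in>I. [:- c i, 1:])"
    by (metis order_mult)
  also have "\<dots> = card {i \<in> insert k I. c i = a}"
  proof (cases "c k = a")
    case True
    hence "{i \<in> insert k I. c i = a} = insert k {i \<in> I. c i = a}"
      by auto
    thus ?thesis
      using True insert by (simp add: order_linear_factor)
  next
    case False
    hence "{i \<in> insert k I. c i = a} = {i \<in> I. c i = a}"
      by auto
    thus ?thesis
      using False insert by (simp add: order_linear_factor)
  qed
  finally show ?case .
qed (simp add: order_0I)

lemma positivity_index_eq_card_pos:
  fixes A :: "real^'n^'n" and lam :: "'n \<Rightarrow> real"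
  assumes "charpoly A = (\<Prod>i\<in>UNIV. [:- lam i, 1:])"
  shows "positivity_index A = card {i. lam i > 0}"
proof -
  let ?P = "{i. lam i > 0}"
  have roots: "{a. a > 0 \<and> poly (charpoly A) a = 0} = lam ` ?P"
    unfolding assms by (auto simp: poly_prod prod_zero_iff)
  have "positivity_index A = (\<Sum>a\<in>lam ` ?P. card {i. lam i = a})"
    unfolding positivity_index_def roots by (simp add: assms order_prod_linear_factors)
  also have "\<dots> = (\<Sum>a\<in>lam ` ?P. card {i \<in> ?P. lam i = a})"
    by (intro sum.cong refl arg_cong[of _ _ card]) auto
  also have "\<dots> = card ?P"
    using sum.image_gen[of ?P "\<lambda>_. 1::nat" lam] by simp
  finally show ?thesis .
qed

section \<open>Hessian of the logarithmic potential\<close>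

definition log_sqnorm_hessian :: "real^'n \<Rightarrow> real^'n^'n" where
  "log_sqnorm_hessian u =
    (\<chi> i j. (2 * (if i = j then 1 else 0) * (norm u)\<^sup>2 - 4 * u $ i * u $ j) / (norm u) ^ 4)"

lemma norm_add_scaleR_axis_squared:
  fixes u :: "real^'n"
  shows "(norm (u + t *\<^sub>R axis i 1))\<^sup>2 = (norm u)\<^sup>2 + 2 * t * u $ i + t\<^sup>2"
  unfolding power2_norm_eq_inner
  by (simp add: inner_add_left inner_add_right inner_axis inner_axis' inner_axis_axis
      inner_commute algebra_simps power2_eq_square)

lemma has_real_derivative_ln_sqnorm_along_axis:
  fixes u :: "real^'n"
  assumes "u \<noteq> 0"
  shows "((\<lambda>t. ln ((norm (u + t *\<^sub>R axis j 1))\<^sup>2)) has_real_derivative 2 * u $ j / (norm u)\<^sup>2) (at 0)"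
proof -
  have "((\<lambda>t. ln ((norm u)\<^sup>2 + 2 * t * u $ j + t\<^sup>2)) has_real_derivative
      (2 * u $ j + 2 * 0) / ((norm u)\<^sup>2 + 2 * 0 * u $ j + 0\<^sup>2)) (at 0)"
    using assms by (auto intro!: derivative_eq_intros)
  thus ?thesis
    by (simp add: norm_add_scaleR_axis_squared)
qed

lemma has_real_derivative_grad_ln_sqnorm_along_axis:
  fixes u :: "real^'n"
  assumes "u \<noteq> 0"
  shows "((\<lambda>t. 2 * (u + t *\<^sub>R axis i 1) $ j / (norm (u + t *\<^sub>R axis i 1))\<^sup>2) has_real_derivative
      log_sqnorm_hessian u $ i $ j) (at 0)"
proof -
  have "((\<lambda>t. 2 * (u $ j + t * (if j = i then 1 else 0)) / ((norm u)\<^sup>2 + 2 * t * u $ i + t\<^sup>2))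
      has_real_derivative
        (2 * (if j = i then 1 else 0) * ((norm u)\<^sup>2 + 2 * 0 * u $ i + 0\<^sup>2)
          - 2 * (u $ j + 0 * (if j = i then 1 else 0)) * (2 * u $ i + 2 * 0))
        / ((norm u)\<^sup>2 + 2 * 0 * u $ i + 0\<^sup>2)\<^sup>2) (at 0)"
    using assms by (auto intro!: derivative_eq_intros)
  moreover have "(\<lambda>t. 2 * (u + t *\<^sub>R axis i 1) $ j / (norm (u + t *\<^sub>R axis i 1))\<^sup>2)
      = (\<lambda>t. 2 * (u $ j + t * (if j = i then 1 else 0)) / ((norm u)\<^sup>2 + 2 * t * u $ i + t\<^sup>2))"
    by (rule ext, simp only: norm_add_scaleR_axis_squared) (simp add: axis_def)
  moreover have "(2 * (if j = i then 1 else 0) * ((norm u)\<^sup>2 + 2 * 0 * u $ i + 0\<^sup>2)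
          - 2 * (u $ j + 0 * (if j = i then 1 else 0)) * (2 * u $ i + 2 * 0))
        / ((norm u)\<^sup>2 + 2 * 0 * u $ i + 0\<^sup>2)\<^sup>2 = log_sqnorm_hessian u $ i $ j"
    by (simp add: log_sqnorm_hessian_def eq_commute[of j i] flip: power_mult)
  ultimately show ?thesis
    by simp
qed

lemma partial_deriv_sum_ln_sqnorm:
  fixes w :: "'k \<Rightarrow> real^'n"
  assumes "finite K" "y \<notin> w ` K"
  shows "partial_deriv (\<lambda>y. \<Sum>k\<in>K. ln ((norm (y - w k))\<^sup>2)) j y
    = (\<Sum>k\<in>K. 2 * (y - w k) $ j / (norm (y - w k))\<^sup>2)"
proof -
  have "((\<lambda>t. \<Sum>k\<in>K. ln ((norm ((y - w k) + t *\<^sub>R axis j 1))\<^sup>2)) has_real_derivative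
      (\<Sum>k\<in>K. 2 * (y - w k) $ j / (norm (y - w k))\<^sup>2)) (at 0)"
    using assms by (intro DERIV_sum has_real_derivative_ln_sqnorm_along_axis) auto
  thus ?thesis
    unfolding partial_deriv_def by (intro DERIV_imp_deriv) (simp add: algebra_simps)
qed

lemma hessian_sum_ln_sqnorm:
  fixes w :: "'k \<Rightarrow> real^'n"
  assumes K: "finite K" and x: "x \<notin> w ` K"
  shows "hessian (\<lambda>y. \<Sum>k\<in>K. ln ((norm (y - w k))\<^sup>2)) x = (\<Sum>k\<in>K. log_sqnorm_hessian (x - w k))"
proof -
  let ?f = "\<lambda>y. \<Sum>k\<in>K. ln ((norm (y - w k))\<^sup>2)"
  have "partial_deriv (partial_deriv ?f j) i x = (\<Sum>k\<in>K. log_sqnorm_hessian (x - w k) $ i $ j)" for i j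
  proof -
    have "open (- w ` K)"
      using K by (simp add: finite_imp_closed open_Compl)
    moreover have "((\<lambda>t. x + t *\<^sub>R axis i 1) \<longlongrightarrow> x + 0 *\<^sub>R axis i 1) (at 0)"
      by (intro tendsto_intros)
    hence "((\<lambda>t. x + t *\<^sub>R axis i 1) \<longlongrightarrow> x) (nhds 0)"
      using tendsto_at_iff_tendsto_nhds[of "\<lambda>t. x + t *\<^sub>R axis i 1" 0] by simp
    ultimately have "\<forall>\<^sub>F t in nhds 0. x + t *\<^sub>R axis i 1 \<notin> w ` K"
      using x by (auto dest: topological_tendstoD)
    hence near: "\<forall>\<^sub>F t in nhds 0. partial_deriv ?f j (x + t *\<^sub>R axis i 1)
        = (\<Sum>k\<in>K. 2 * ((x - w k) + t *\<^sub>R axis i 1) $ j / (norm ((x - w k) + t *\<^sub>R axis i 1))\<^sup>2)"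
      by (rule eventually_mono) (simp add: partial_deriv_sum_ln_sqnorm[OF K] algebra_simps)
    have "((\<lambda>t. \<Sum>k\<in>K. 2 * ((x - w k) + t *\<^sub>R axis i 1) $ j / (norm ((x - w k) + t *\<^sub>R axis i 1))\<^sup>2)
        has_real_derivative (\<Sum>k\<in>K. log_sqnorm_hessian (x - w k) $ i $ j)) (at 0)"
      using x by (intro DERIV_sum has_real_derivative_grad_ln_sqnorm_along_axis) auto
    hence "((\<lambda>t. partial_deriv ?f j (x + t *\<^sub>R axis i 1))
        has_real_derivative (\<Sum>k\<in>K. log_sqnorm_hessian (x - w k) $ i $ j)) (at 0)"
      using DERIV_cong_ev[OF refl near refl] by simp
    thus ?thesis
      unfolding partial_deriv_def[of "partial_deriv ?f j"] by (rule DERIV_imp_deriv)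
  qed
  thus ?thesis
    unfolding hessian_def by (simp add: vec_eq_iff)
qed

lemma log_sqnorm_hessian_mult:
  "log_sqnorm_hessian u *v e = (1 / norm u ^ 4) *\<^sub>R ((2 * (norm u)\<^sup>2) *\<^sub>R e - (4 * (u \<bullet> e)) *\<^sub>R u)"
proof -
  have "(\<Sum>j\<in>UNIV. (2 * (if i = j then 1 else 0) * (norm u)\<^sup>2 - 4 * u $ i * u $ j) / norm u ^ 4 * e $ j)
      = (2 * (norm u)\<^sup>2 * e $ i - 4 * (u \<bullet> e) * u $ i) / norm u ^ 4" for i
  proof -
    have "(\<Sum>j\<in>UNIV. (2 * (if i = j then 1 else 0) * (norm u)\<^sup>2 - 4 * u $ i * u $ j) / norm u ^ 4 * e $ j)
        = (\<Sum>j\<in>UNIV. 2 * (norm u)\<^sup>2 / norm u ^ 4 * (if i = j then e $ j else 0)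
            - 4 * u $ i / norm u ^ 4 * (u $ j * e $ j))"
      by (intro sum.cong refl) (simp add: diff_divide_distrib left_diff_distrib)
    also have "\<dots> = 2 * (norm u)\<^sup>2 / norm u ^ 4 * e $ i - 4 * u $ i / norm u ^ 4 * (u \<bullet> e)"
      using sum_subtractf[of "\<lambda>j. _ * (if i = j then e $ j else 0)" "\<lambda>j. _ * (u $ j * e $ j)" UNIV]
      by (simp only: inner_vec_def flip: sum_distrib_left) simp
    also have "\<dots> = (2 * (norm u)\<^sup>2 * e $ i - 4 * (u \<bullet> e) * u $ i) / norm u ^ 4"
      by (simp add: diff_divide_distrib)
    finally show ?thesis .
  qed
  thus ?thesis
    by (simp add: vec_eq_iff log_sqnorm_hessian_def matrix_vector_mult_def)
qed

lemma inner_log_sqnorm_hessian: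
  "e \<bullet> (log_sqnorm_hessian u *v e) = (2 * (norm u)\<^sup>2 * (e \<bullet> e) - 4 * (u \<bullet> e)\<^sup>2) / norm u ^ 4"
  by (simp add: log_sqnorm_hessian_mult inner_diff_right power2_eq_square inner_commute[of e u]
      diff_divide_distrib)

lemma norm_diff_projection_plane_squared:
  assumes e: "e1 \<bullet> e1 = 1" "e2 \<bullet> e2 = 1" "e1 \<bullet> e2 = 0"
  shows "(norm (u - (u \<bullet> e1) *\<^sub>R e1 - (u \<bullet> e2) *\<^sub>R e2))\<^sup>2 = (norm u)\<^sup>2 - (u \<bullet> e1)\<^sup>2 - (u \<bullet> e2)\<^sup>2"
  using e unfolding power2_norm_eq_inner
  by (simp add: inner_diff_left inner_diff_right inner_commute power2_eq_square algebra_simps)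

lemma log_sqnorm_hessian_trace_on_plane:
  assumes e: "e1 \<bullet> e1 = 1" "e2 \<bullet> e2 = 1" "e1 \<bullet> e2 = 0"
  shows "e1 \<bullet> (log_sqnorm_hessian u *v e1) + e2 \<bullet> (log_sqnorm_hessian u *v e2)
    = 4 * (norm (u - (u \<bullet> e1) *\<^sub>R e1 - (u \<bullet> e2) *\<^sub>R e2))\<^sup>2 / norm u ^ 4"
proof -
  have "e1 \<bullet> (log_sqnorm_hessian u *v e1) + e2 \<bullet> (log_sqnorm_hessian u *v e2)
      = ((2 * (norm u)\<^sup>2 - 4 * (u \<bullet> e1)\<^sup>2) + (2 * (norm u)\<^sup>2 - 4 * (u \<bullet> e2)\<^sup>2)) / norm u ^ 4"
    using e by (simp only: inner_log_sqnorm_hessian add_divide_distrib mult_1_right)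
  also have "\<dots> = 4 * ((norm u)\<^sup>2 - (u \<bullet> e1)\<^sup>2 - (u \<bullet> e2)\<^sup>2) / norm u ^ 4"
    by (simp add: algebra_simps)
  finally show ?thesis
    by (simp only: norm_diff_projection_plane_squared[OF e])
qed

lemma matrix_vector_mult_sum_left:
  "(\<Sum>k\<in>K. M k) *v v = (\<Sum>k\<in>K. M k *v v)"
  by (induction K rule: infinite_finite_induct) (simp_all add: matrix_vector_mult_add_rdistrib)

lemma transpose_sum_symmetric:
  assumes "\<And>k. k \<in> K \<Longrightarrow> transpose (M k) = M k"
  shows "transpose (\<Sum>k\<in>K. M k) = (\<Sum>k\<in>K. M k)"
proof -
  have "transpose (\<Sum>k\<in>K. M k) = (\<Sum>k\<in>K. transpose (M k))"
    by (simp add: transpose_def vec_eq_iff)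
  thus ?thesis
    using assms by simp
qed

lemma log_sqnorm_hessian_symmetric: "transpose (log_sqnorm_hessian u) = log_sqnorm_hessian u"
  by (auto simp: transpose_def log_sqnorm_hessian_def vec_eq_iff mult.commute)

lemma poles_in_plane_if_hessian_trace_nonpos:
  fixes w :: "'k \<Rightarrow> real^'n"
  assumes K: "finite K" and x: "x \<notin> w ` K"
    and e: "e1 \<bullet> e1 = 1" "e2 \<bullet> e2 = 1" "e1 \<bullet> e2 = 0"
    and nonpos: "e1 \<bullet> ((\<Sum>k\<in>K. log_sqnorm_hessian (x - w k)) *v e1)
      + e2 \<bullet> ((\<Sum>k\<in>K. log_sqnorm_hessian (x - w k)) *v e2) \<le> 0"
  shows "w ` K \<subseteq> affine hull {x, x + e1, x + e2}"
proof
  define r where "r k = (x - w k) - ((x - w k) \<bullet> e1) *\<^sub>R e1 - ((x - w k) \<bullet> e2) *\<^sub>R e2" for k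
  define T where "T k = 4 * (norm (r k))\<^sup>2 / norm (x - w k) ^ 4" for k
  have "(\<Sum>k\<in>K. T k) \<le> 0"
    using nonpos
    by (simp add: matrix_vector_mult_sum_left inner_sum_right log_sqnorm_hessian_trace_on_plane[OF e]
        T_def r_def flip: sum.distrib)
  moreover have "T k \<ge> 0" for k
    by (simp add: T_def)
  ultimately have T_zero: "T k = 0" if "k \<in> K" for k
    using K that sum_nonneg_eq_0_iff[of K T] by (simp add: order_antisym sum_nonneg)
  fix y assume "y \<in> w ` K"
  then obtain k where k: "k \<in> K" "y = w k"
    by blast
  have "x - w k \<noteq> 0"
    using x k by auto
  with T_zero[OF k(1)] have "r k = 0"
    by (simp add: T_def)
  hence "y = (1 + (x - w k) \<bullet> e1 + (x - w k) \<bullet> e2) *\<^sub>R x + (- ((x - w k) \<bullet> e1)) *\<^sub>R (x + e1)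
      + (- ((x - w k) \<bullet> e2)) *\<^sub>R (x + e2)"
    unfolding k(2) r_def by (simp add: algebra_simps)
  thus "y \<in> affine hull {x, x + e1, x + e2}"
    unfolding affine_hull_3
    by (intro CollectI exI[of _ "1 + (x - w k) \<bullet> e1 + (x - w k) \<bullet> e2"] exI[of _ "- ((x - w k) \<bullet> e1)"]
        exI[of _ "- ((x - w k) \<bullet> e2)"]) simp
qed

lemma aff_dim_affine_hull_3_le: "aff_dim (affine hull {a, b, c :: 'a::euclidean_space}) \<le> 2"
proof -
  have "aff_dim {a, b, c} \<le> int (card {a, b, c}) - 1"
    by (rule aff_dim_le_card) simp
  also have "\<dots> \<le> 2"
    by (simp add: card_insert_if)
  finally show ?thesis
    by simp
qed

lemma card_nonpos_eigenvalues_le_1: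
  fixes w :: "'k \<Rightarrow> real^'n::finite" and q :: "'n \<Rightarrow> real^'n" and lam :: "'n \<Rightarrow> real"
  assumes K: "finite K" and x: "x \<notin> w ` K" and aff: "aff_dim (w ` K) \<ge> 3"
    and orth: "\<And>i j. q i \<bullet> q j = (if i = j then 1 else 0)"
    and eigen: "\<And>i. (\<Sum>k\<in>K. log_sqnorm_hessian (x - w k)) *v q i = lam i *\<^sub>R q i"
  shows "card {i. lam i \<le> 0} \<le> 1"
proof -
  have "i = j" if "lam i \<le> 0" "lam j \<le> 0" for i j
  proof (rule ccontr)
    assume "i \<noteq> j"
    hence e: "q i \<bullet> q i = 1" "q j \<bullet> q j = 1" "q i \<bullet> q j = 0"
      using orth by auto
    have "q i \<bullet> ((\<Sum>k\<in>K. log_sqnorm_hessian (x - w k)) *v q i)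
        + q j \<bullet> ((\<Sum>k\<in>K. log_sqnorm_hessian (x - w k)) *v q j) \<le> 0"
      using that by (simp add: eigen e)
    hence "w ` K \<subseteq> affine hull {x, x + q i, x + q j}"
      by (rule poles_in_plane_if_hessian_trace_nonpos[OF K x e])
    hence "aff_dim (w ` K) \<le> aff_dim (affine hull {x, x + q i, x + q j})"
      by (rule aff_dim_subset)
    also have "\<dots> \<le> 2"
      by (rule aff_dim_affine_hull_3_le)
    finally show False
      using aff by simp
  qed
  hence "card {i. lam i \<le> 0} \<le> Suc 0"
    by (subst card_le_Suc0_iff_eq) auto
  thus ?thesis
    by simp
qed

theorem proposition2p4:
  fixes n r :: nat and w :: "nat \<Rightarrow> real^'d" and x :: "real^'d"
    and f :: "real^'d \<Rightarrow> real"
  assumes dim: "CARD('d) = 2 * n"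
    and distinct: "inj_on w {..<r}"
    and span: "aff_dim (w ` {..<r}) \<ge> 3"
    and f_def: "\<And>y. f y = (\<Sum>i<r. ln ((norm (y - w i))\<^sup>2))"
    and x_dom: "x \<notin> w ` {..<r}"
    and crit: "(f has_derivative (\<lambda>_. 0)) (at x)"
  shows "positivity_index (hessian f x) \<ge> 2 * n - 1"
proof -
  let ?H = "\<Sum>k<r. log_sqnorm_hessian (x - w k)"
  have "f = (\<lambda>y. \<Sum>k<r. ln ((norm (y - w k))\<^sup>2))"
    using f_def by blast
  hence hess: "hessian f x = ?H"
    using hessian_sum_ln_sqnorm[OF finite_lessThan x_dom] by simp
  have "transpose ?H = ?H"
    by (rule transpose_sum_symmetric) (rule log_sqnorm_hessian_symmetric)
  then obtain q :: "'d \<Rightarrow> real^'d" and lam where orth: "\<And>i j. q i \<bullet> q j = (if i = j then 1 else 0)"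
    and eigen: "\<And>i. ?H *v q i = lam i *\<^sub>R q i"
    using symmetric_matrix_orthonormal_eigenvectors by metis
  have "positivity_index (hessian f x) = card {i. lam i > 0}"
    unfolding hess by (rule positivity_index_eq_card_pos[OF charpoly_orthonormal_eigenvectors[OF orth eigen]])
  also have "\<dots> = card (UNIV - {i. lam i \<le> 0})"
    by (rule arg_cong[of _ _ card]) auto
  also have "\<dots> = CARD('d) - card {i. lam i \<le> 0}"
    by (simp add: card_Diff_subset)
  finally show ?thesis
    using card_nonpos_eigenvalues_le_1[OF finite_lessThan x_dom span orth eigen] dim by linarith
qed

end
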